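(* Let $\sigma$ be a convex polytope in a Euclidean vector space $\mathbb{E}$ and let $D\subseteq\mathbb{E}$ be a finite set which is sufficiently rich for $\sigma$. For a vertex $v$ of $\sigma$ let $E_v=\{w-v \mid w \text{ a vertex of }\sigma,\ w\neq v\}$. Then for every point $x\in Z(D)$ there is a vertex $v$ of $\sigma$ such that $x+Z(E_v)\subseteq Z(D)$. In particular $Z(D)$ contains a parallel translate of $\sigma$ that contains $x$.
   Context: For a finite set $D\subseteq\mathbb{E}$, the zonotope $Z(D)=\sum_{z\in D}[0,z]$ is the Minkowski sum of the segments $[0,z]$. $D$ is sufficiently rich for a polytope $\sigma$ if $w-v\in D$ for any two distinct vertices $v,w$ of $\sigma$. *)

theory Defs
  imports "HOL-Analysis.Analysis"
begin

text \<open>Zonotope: Minkowski sum of the segments from 0 to z, z in D (D finite).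
  An element of the Minkowski sum is a sum of one point t z times z from each segment.\<close>
definition zonotope :: "'a::real_vector set \<Rightarrow> 'a set" where
  "zonotope D = {(\<Sum>z\<in>D. t z *\<^sub>R z) | t. \<forall>z\<in>D. 0 \<le> t z \<and> t z \<le> (1::real)}"

definition vertices :: "'a::real_vector set \<Rightarrow> 'a set" where
  "vertices \<sigma> = {v. v extreme_point_of \<sigma>}"

definition sufficiently_rich :: "'a::real_vector set \<Rightarrow> 'a set \<Rightarrow> bool" where
  "sufficiently_rich D \<sigma> \<longleftrightarrow>
     (\<forall>v\<in>vertices \<sigma>. \<forall>w\<in>vertices \<sigma>. v \<noteq> w \<longrightarrow> w - v \<in> D)"

definition edge_dirs :: "'a::real_vector set \<Rightarrow> 'a \<Rightarrow> 'a set" where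
  "edge_dirs \<sigma> v = {w - v | w. w \<in> vertices \<sigma> \<and> w \<noteq> v}"

end

theory Submission imports Defs begin

(* Write x \<in> Z(D) as x = \<Sum>z\<in>D. t z *\<^sub>R z with coefficients in [0,1], choosing
   the representation with the fewest positive coefficients.  Orient the vertex set V of \<sigma>
   by letting w - v be an "active" direction when t (w - v) > 0.  If every vertex had an
   active outgoing direction, following them would produce a closed walk v0 \<rightarrow> v1 \<rightarrow> ...,
   whose steps sum to 0; subtracting a small multiple of this relation from t kills a
   coefficient, contradicting minimality.  Hence some vertex v is a sink: t vanishes on
   E_v.  Since E_v \<subseteq> D, the coefficients on E_v are free, so x + Z(E_v) \<subseteq> Z(D).
   Finally \<sigma> - v \<subseteq> Z(E_v) because \<sigma> is the convex hull of its vertices, which gives the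
   translate x - v + \<sigma> containing x. *)

definition unit_coeffs :: "'a set \<Rightarrow> ('a \<Rightarrow> real) \<Rightarrow> bool" where
  "unit_coeffs D t \<longleftrightarrow> (\<forall>z\<in>D. 0 \<le> t z \<and> t z \<le> 1)"

lemma zonotope_iff: "x \<in> zonotope D \<longleftrightarrow> (\<exists>t. unit_coeffs D t \<and> x = (\<Sum>z\<in>D. t z *\<^sub>R z))"
  unfolding zonotope_def unit_coeffs_def by blast

text \<open>A nonnegative linear relation \<open>\<Sum> m z z = 0\<close> supported inside the positive support of
  \<open>t\<close> can be subtracted from \<open>t\<close> until one coefficient vanishes: the represented point is
  unchanged and the positive support shrinks strictly.\<close>
lemma reduce_support:
  fixes D :: "'a::real_vector set"
  assumes fD: "finite D" and t: "unit_coeffs D t"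
    and m_nonneg: "\<And>z. z \<in> D \<Longrightarrow> 0 \<le> m z"
    and m_supp: "\<And>z. z \<in> D \<Longrightarrow> 0 < m z \<Longrightarrow> 0 < t z"
    and d: "d \<in> D" "0 < m d"
    and relation: "(\<Sum>z\<in>D. m z *\<^sub>R z) = 0"
  shows "\<exists>t'. unit_coeffs D t' \<and> (\<Sum>z\<in>D. t' z *\<^sub>R z) = (\<Sum>z\<in>D. t z *\<^sub>R z)
           \<and> card {z\<in>D. 0 < t' z} < card {z\<in>D. 0 < t z}"
proof -
  define S where "S = {z\<in>D. 0 < m z}"
  have fS: "finite S" and dS: "d \<in> S" using fD d by (auto simp: S_def)
  define \<epsilon> where "\<epsilon> = Min ((\<lambda>z. t z / m z) ` S)"
  have "\<epsilon> \<in> (\<lambda>z. t z / m z) ` S" unfolding \<epsilon>_def using fS dS by (intro Min_in) auto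
  then obtain z0 where z0: "z0 \<in> S" "\<epsilon> = t z0 / m z0" by auto
  have eps_le: "\<epsilon> \<le> t z / m z" if "z \<in> S" for z
    unfolding \<epsilon>_def using fS that by (intro Min_le) auto
  have eps_pos: "0 < \<epsilon>" using z0 m_supp by (simp add: S_def)
  define t' where "t' z = t z - \<epsilon> * m z" for z
  have t'_le: "t' z \<le> t z" if "z \<in> D" for z
    using eps_pos m_nonneg[OF that] by (simp add: t'_def)
  have t'_nonneg: "0 \<le> t' z" if "z \<in> D" for z
  proof (cases "z \<in> S")
    case True
    then have "\<epsilon> * m z \<le> t z" using eps_le[OF True] by (simp add: S_def pos_le_divide_eq)
    then show ?thesis by (simp add: t'_def)
  next
    case False
    then have "m z = 0" using that m_nonneg[OF that] by (simp add: S_def)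
    then show ?thesis using t that by (simp add: t'_def unit_coeffs_def)
  qed
  have "unit_coeffs D t'"
    using t t'_le t'_nonneg unfolding unit_coeffs_def by (meson order_trans)
  moreover have "(\<Sum>z\<in>D. t' z *\<^sub>R z) = (\<Sum>z\<in>D. t z *\<^sub>R z) - \<epsilon> *\<^sub>R (\<Sum>z\<in>D. m z *\<^sub>R z)"
    by (simp add: t'_def algebra_simps sum_subtractf scaleR_sum_right)
  moreover have "{z\<in>D. 0 < t' z} \<subset> {z\<in>D. 0 < t z}"
  proof
    show "{z\<in>D. 0 < t' z} \<subseteq> {z\<in>D. 0 < t z}" using t'_le by (auto intro: less_le_trans)
    have "t' z0 = 0" using z0 by (simp add: t'_def S_def)
    moreover have "z0 \<in> {z\<in>D. 0 < t z}" using z0(1) m_supp by (auto simp: S_def)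
    ultimately show "{z\<in>D. 0 < t' z} \<noteq> {z\<in>D. 0 < t z}" by force
  qed
  then have "card {z\<in>D. 0 < t' z} < card {z\<in>D. 0 < t z}" using fD by (simp add: psubset_card_mono)
  ultimately show ?thesis using relation by auto
qed

lemma multiplicity_relation:
  fixes step :: "'b \<Rightarrow> 'a::real_vector"
  assumes fK: "finite K" and fD: "finite D" and stepD: "step ` K \<subseteq> D"
    and closed: "(\<Sum>k\<in>K. step k) = 0"
  shows "(\<Sum>z\<in>D. real (card {k\<in>K. step k = z}) *\<^sub>R z) = 0"
proof -
  have "(\<Sum>z\<in>D. real (card {k\<in>K. step k = z}) *\<^sub>R z) = (\<Sum>z\<in>D. \<Sum>k\<in>{k\<in>K. step k = z}. step k)"
    by (rule sum.cong) (auto simp: sum_constant_scaleR)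
  also have "\<dots> = (\<Sum>k\<in>K. step k)"
    using sum.group[OF fK fD, of step step] stepD by auto
  finally show ?thesis using closed by simp
qed

text \<open>Pigeonhole for iterates: the orbit of a point under a self-map of a finite set
  revisits a point, so the displacements along the orbit between the two visits sum to 0.\<close>
lemma closed_walk:
  fixes f :: "'a::ab_group_add \<Rightarrow> 'a"
  assumes fV: "finite V" and v0: "v0 \<in> V" and f_closed: "\<And>v. v \<in> V \<Longrightarrow> f v \<in> V"
  shows "\<exists>p i j. i < j \<and> (\<forall>k. p k \<in> V \<and> p (Suc k) = f (p k))
           \<and> (\<Sum>k\<in>{i..<j}. p (Suc k) - p k) = 0"
proof -
  define p where "p n = (f ^^ n) v0" for n
  have orbit: "p n \<in> V" for n unfolding p_def by (induction n) (simp_all add: v0 f_closed)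
  have "\<not> inj_on p {..card V}"
  proof
    assume "inj_on p {..card V}"
    then have "card (p ` {..card V}) = Suc (card V)" by (simp add: card_image)
    moreover have "card (p ` {..card V}) \<le> card V" using orbit fV by (intro card_mono) auto
    ultimately show False by simp
  qed
  then obtain i j where "i \<noteq> j" "p i = p j" unfolding inj_on_def by blast
  then obtain i j where ij: "i < j" "p i = p j" by (metis linorder_neqE_nat)
  then have "(\<Sum>k\<in>{i..<j}. p (Suc k) - p k) = 0" using sum_Suc_diff'[of i j p] by simp
  then show ?thesis using ij orbit by (intro exI[of _ p] exI[of _ i] exI[of _ j]) (simp add: p_def)
qed

text \<open>Take a representation with minimal positive support; a vertex set without such a sink
  would contain a closed walk along active directions, contradicting \<open>reduce_support\<close>.\<close>
lemma sink_exists: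
  fixes D V :: "'a::real_vector set"
  assumes fD: "finite D" and fV: "finite V" and neV: "V \<noteq> {}"
    and rich: "\<And>v w. v \<in> V \<Longrightarrow> w \<in> V \<Longrightarrow> v \<noteq> w \<Longrightarrow> w - v \<in> D"
    and x: "x \<in> zonotope D"
  shows "\<exists>t v. unit_coeffs D t \<and> x = (\<Sum>z\<in>D. t z *\<^sub>R z) \<and> v \<in> V
           \<and> (\<forall>w\<in>V. w \<noteq> v \<longrightarrow> t (w - v) = 0)"
proof -
  define rep where "rep t \<longleftrightarrow> unit_coeffs D t \<and> x = (\<Sum>z\<in>D. t z *\<^sub>R z)" for t
  obtain t0 where "rep t0" using x unfolding zonotope_iff rep_def by blast
  then obtain t where rep_t: "rep t"
    and minimal: "\<And>t'. rep t' \<Longrightarrow> card {z\<in>D. 0 < t z} \<le> card {z\<in>D. 0 < t' z}"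
    using ex_has_least_nat[of rep t0 "\<lambda>t. card {z\<in>D. 0 < t z}"] by blast
  have t_nonneg: "0 \<le> t z" if "z \<in> D" for z
    using rep_t that by (simp add: rep_def unit_coeffs_def)
  show ?thesis
  proof (rule ccontr)
    assume no_sink: "\<not> ?thesis"
    have "\<exists>w\<in>V. w \<noteq> v \<and> 0 < t (w - v)" if "v \<in> V" for v
    proof -
      have "\<not> (\<forall>w\<in>V. w \<noteq> v \<longrightarrow> t (w - v) = 0)"
        using no_sink rep_t that unfolding rep_def by blast
      then obtain w where w: "w \<in> V" "w \<noteq> v" "t (w - v) \<noteq> 0" by blast
      then show ?thesis using t_nonneg[OF rich[OF that w(1)]] by force
    qed
    then obtain f where f: "\<And>v. v \<in> V \<Longrightarrow> f v \<in> V \<and> f v \<noteq> v \<and> 0 < t (f v - v)"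
      by metis
    obtain v0 where "v0 \<in> V" using neV by auto
    then obtain p i j where ij: "i < j" and walk: "\<And>k. p k \<in> V \<and> p (Suc k) = f (p k)"
      and closed: "(\<Sum>k\<in>{i..<j}. p (Suc k) - p k) = 0"
      using closed_walk[OF fV \<open>v0 \<in> V\<close>, of f] f by blast
    define step where "step k = p (Suc k) - p k" for k
    have stepD: "step ` {i..<j} \<subseteq> D"
    proof
      fix z assume "z \<in> step ` {i..<j}"
      then obtain k where "z = f (p k) - p k" using walk by (auto simp: step_def)
      then show "z \<in> D" using rich[of "p k" "f (p k)"] walk[of k] f[of "p k"] by auto
    qed
    have step_active: "0 < t (step k)" for k
      using walk f by (simp add: step_def)
    define m where "m z = real (card {k\<in>{i..<j}. step k = z})" for z
    have d: "step i \<in> D" "0 < m (step i)"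
      using stepD ij(1) by (auto simp: m_def card_gt_0_iff)
    have m_supp: "0 < t z" if "0 < m z" for z
      using that step_active by (fastforce simp: m_def card_gt_0_iff)
    have relation: "(\<Sum>z\<in>D. m z *\<^sub>R z) = 0"
      unfolding m_def by (rule multiplicity_relation[OF _ fD stepD closed[folded step_def]]) simp
    have "unit_coeffs D t" using rep_t by (simp add: rep_def)
    then obtain t' where "unit_coeffs D t'"
        "(\<Sum>z\<in>D. t' z *\<^sub>R z) = (\<Sum>z\<in>D. t z *\<^sub>R z)"
        and smaller: "card {z\<in>D. 0 < t' z} < card {z\<in>D. 0 < t z}"
      using reduce_support[of D t m, OF fD _ _ m_supp d relation] by (auto simp: m_def)
    then have "rep t'" using rep_t by (simp add: rep_def)
    with minimal smaller show False by fastforce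
  qed
qed

lemma absorb_zonotope:
  fixes D E :: "'a::real_vector set"
  assumes fD: "finite D" and ED: "E \<subseteq> D" and t: "unit_coeffs D t"
    and vanish: "\<And>e. e \<in> E \<Longrightarrow> t e = 0"
  shows "(\<lambda>y. (\<Sum>z\<in>D. t z *\<^sub>R z) + y) ` zonotope E \<subseteq> zonotope D"
proof
  fix y assume "y \<in> (\<lambda>y. (\<Sum>z\<in>D. t z *\<^sub>R z) + y) ` zonotope E"
  then obtain e where "e \<in> zonotope E" and y: "y = (\<Sum>z\<in>D. t z *\<^sub>R z) + e" by blast
  then obtain s where s: "unit_coeffs E s" and e: "e = (\<Sum>z\<in>E. s z *\<^sub>R z)"
    unfolding zonotope_iff by blast
  define t' where "t' z = (if z \<in> E then s z else t z)" for z
  have "unit_coeffs D t'" using t s by (auto simp: t'_def unit_coeffs_def)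
  have split: "(\<Sum>z\<in>D. g z) = (\<Sum>z\<in>D-E. g z) + (\<Sum>z\<in>E. g z)" for g :: "'a \<Rightarrow> 'a"
    using sum.subset_diff[OF ED fD] by simp
  have "(\<Sum>z\<in>D. t' z *\<^sub>R z) = (\<Sum>z\<in>D-E. t z *\<^sub>R z) + (\<Sum>z\<in>E. s z *\<^sub>R z)"
    by (simp add: split t'_def)
  also have "(\<Sum>z\<in>D-E. t z *\<^sub>R z) = (\<Sum>z\<in>D. t z *\<^sub>R z)"
    by (simp add: split vanish)
  finally show "y \<in> zonotope D"
    using y e \<open>unit_coeffs D t'\<close> unfolding zonotope_iff by metis
qed

text \<open>The convex hull of a finite set \<open>V\<close>, translated by \<open>-v\<close> for \<open>v \<in> V\<close>, lies in the
  zonotope of the directions \<open>w - v\<close>: barycentric coordinates are coefficients in [0,1].\<close>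
lemma convex_hull_in_zonotope:
  fixes V :: "'a::real_vector set"
  assumes fV: "finite V" and v: "v \<in> V" and y: "y \<in> convex hull V"
  shows "y - v \<in> zonotope {w - v | w. w \<in> V \<and> w \<noteq> v}"
proof -
  obtain u where u_nonneg: "\<forall>w\<in>V. 0 \<le> u w" and u_sum: "sum u V = 1"
    and u_y: "(\<Sum>w\<in>V. u w *\<^sub>R w) = y"
    using y unfolding convex_hull_finite[OF fV] by blast
  define E where "E = {w - v | w. w \<in> V \<and> w \<noteq> v}"
  have E: "E = (\<lambda>w. w - v) ` (V - {v})" unfolding E_def by auto
  have inj: "inj_on (\<lambda>w. w - v) (V - {v})" by (auto intro: inj_onI)
  define s where "s e = u (e + v)" for e
  have "(\<Sum>e\<in>E. s e *\<^sub>R e) = (\<Sum>w\<in>V-{v}. u w *\<^sub>R (w - v))"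
    unfolding E by (subst sum.reindex[OF inj]) (simp add: s_def)
  also have "\<dots> = (\<Sum>w\<in>V. u w *\<^sub>R (w - v))"
    using sum.remove[OF fV v, of "\<lambda>w. u w *\<^sub>R (w - v)"] by simp
  also have "\<dots> = (\<Sum>w\<in>V. u w *\<^sub>R w) - (\<Sum>w\<in>V. u w) *\<^sub>R v"
    by (simp add: scaleR_diff_right sum_subtractf scaleR_sum_left)
  also have "\<dots> = y - v" using u_y u_sum by simp
  finally have "y - v = (\<Sum>e\<in>E. s e *\<^sub>R e)" ..
  moreover have "unit_coeffs E s"
    unfolding unit_coeffs_def
  proof
    fix e assume "e \<in> E"
    then obtain w where w: "w \<in> V" "e = w - v" unfolding E_def by auto
    have "u w \<le> sum u V" using member_le_sum[of w V u] u_nonneg w fV by simp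
    then show "0 \<le> s e \<and> s e \<le> 1" using u_nonneg w u_sum by (simp add: s_def)
  qed
  ultimately show ?thesis unfolding zonotope_iff E_def by blast
qed

lemma polytope_vertices:
  fixes \<sigma> :: "'a::euclidean_space set"
  assumes "polytope \<sigma>" and "\<sigma> \<noteq> {}"
  shows "finite (vertices \<sigma>)" "vertices \<sigma> \<noteq> {}" "\<sigma> = convex hull (vertices \<sigma>)"
proof -
  obtain P where "finite P" "\<sigma> = convex hull P" using assms(1) unfolding polytope_def by blast
  then show "finite (vertices \<sigma>)"
    unfolding vertices_def by (metis extreme_points_of_convex_hull finite_subset)
  show hull: "\<sigma> = convex hull (vertices \<sigma>)"
    unfolding vertices_def
    using Krein_Milman_Minkowski[OF polytope_imp_compact polytope_imp_convex] assms(1) by blast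
  show "vertices \<sigma> \<noteq> {}" using assms(2) hull by auto
qed

theorem mainTheorem15:
  fixes \<sigma> D :: "'a::euclidean_space set"
  assumes "polytope \<sigma>" and "\<sigma> \<noteq> {}"
    and "finite D" and "sufficiently_rich D \<sigma>"
  shows "\<forall>x\<in>zonotope D.
           (\<exists>v\<in>vertices \<sigma>. (\<lambda>y. x + y) ` zonotope (edge_dirs \<sigma> v) \<subseteq> zonotope D)
         \<and> (\<exists>t. x \<in> (\<lambda>y. t + y) ` \<sigma> \<and> (\<lambda>y. t + y) ` \<sigma> \<subseteq> zonotope D)"
proof
  fix x assume x: "x \<in> zonotope D"
  note V = polytope_vertices[OF assms(1,2)]
  have rich: "\<And>v w. v \<in> vertices \<sigma> \<Longrightarrow> w \<in> vertices \<sigma> \<Longrightarrow> v \<noteq> w \<Longrightarrow> w - v \<in> D"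
    using assms(4) unfolding sufficiently_rich_def by blast
  obtain t v where t: "unit_coeffs D t" and x_eq: "x = (\<Sum>z\<in>D. t z *\<^sub>R z)"
    and v: "v \<in> vertices \<sigma>" and sink: "\<forall>w\<in>vertices \<sigma>. w \<noteq> v \<longrightarrow> t (w - v) = 0"
    using sink_exists[OF assms(3) V(1,2) rich x] by blast
  have "edge_dirs \<sigma> v \<subseteq> D" "\<And>e. e \<in> edge_dirs \<sigma> v \<Longrightarrow> t e = 0"
    using rich[OF v] sink unfolding edge_dirs_def by auto
  then have absorbed: "(\<lambda>y. x + y) ` zonotope (edge_dirs \<sigma> v) \<subseteq> zonotope D"
    using absorb_zonotope[OF assms(3) _ t] x_eq by blast
  have "y - v \<in> zonotope (edge_dirs \<sigma> v)" if "y \<in> \<sigma>" for y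
    using convex_hull_in_zonotope[OF V(1) v] that V(3) unfolding edge_dirs_def by blast
  then have "(\<lambda>y. (x - v) + y) ` \<sigma> \<subseteq> zonotope D"
    using absorbed by (force simp: algebra_simps)
  moreover have "x \<in> (\<lambda>y. (x - v) + y) ` \<sigma>"
    using v by (intro image_eqI[of _ _ v]) (auto simp: vertices_def extreme_point_of_def)
  ultimately show "(\<exists>v\<in>vertices \<sigma>. (\<lambda>y. x + y) ` zonotope (edge_dirs \<sigma> v) \<subseteq> zonotope D)
         \<and> (\<exists>t. x \<in> (\<lambda>y. t + y) ` \<sigma> \<and> (\<lambda>y. t + y) ` \<sigma> \<subseteq> zonotope D)"
    using absorbed v by blast
qed

end
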